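(* Let $G$ be a group, $S \subset G$ a finite set of semigroup generators of $G$, $\Sigma$ a finite alphabet, $L \subseteq \Sigma^*$ a language and $\psi : L \to G$ a bijection. Suppose that for every $s \in S$ there is a function $f_s : \Sigma^* \to \Sigma^*$ with $\psi(f_s(w)) = \psi(w)s$ for all $w \in L$, such that $f_s$ is computed by a one-tape Turing machine in time $o(n \log n)$, in the following sense: there is a one-tape Turing machine $\mathrm{TM}_s$ and a function $T_s(n)$ with $T_s(n)/(n\log n) \to 0$ such that on every input $x \in \Sigma^*$ of length $n$ (tape initially $\boxplus x \boxdot^\infty$, head on $\boxplus$), $\mathrm{TM}_s$ halts within $T_s(n)$ steps with tape content $\boxplus y \boxdot^\infty$, where $y$ is empty or does not end in $\boxdot$, and $f_s(x)$ is the string obtained from $y$ by deleting all symbols not in $\Sigma$. Then the normal form $\psi$ is quasigeodesic: there exists a constant $C > 0$ such that for every $g \in G$, $|w| \leqslant C(d_S(g) + 1)$, where $w \in L$ is the unique string with $\psi(w) = g$.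
   Context: A one-tape Turing machine has one semi-infinite tape whose leftmost cell contains the unmodifiable symbol $\boxplus$ (occurring only there); $\boxdot$ denotes the blank symbol; the tape alphabet contains $\Sigma \cup \{\boxplus, \boxdot\}$. For $g \in G$, $d_S(g)$ denotes the length of a shortest word $g_1 \dots g_n$ with $g_i \in S$ such that $g = g_1 \cdots g_n$ in $G$. $|w|$ denotes the length of the string $w$. *)

theory Defs
  imports Complex_Main "HOL-Algebra.Group"
begin

text \<open>Tape symbols: input letters from the finite alphabet 'a (Sigma), the left-end
  marker (boxplus), the blank (boxdot), and finitely many auxiliary symbols (coded by nat).\<close>

datatype 'a tsym = Sym 'a | LeftEnd | Blank | Aux nat

text \<open>Moves: -1 = left, 0 = stay, 1 = right.  States are coded by naturals.\<close>

record 'a tm =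
  tm_states :: "nat set"
  tm_aux    :: "nat set"
  tm_start  :: nat
  tm_final  :: "nat set"
  tm_delta  :: "nat \<Rightarrow> 'a tsym \<Rightarrow> nat \<times> 'a tsym \<times> int"

definition tm_alphabet :: "'a tm \<Rightarrow> 'a tsym set" where
  "tm_alphabet M = range Sym \<union> {LeftEnd, Blank} \<union> Aux ` tm_aux M"

definition wf_tm :: "'a tm \<Rightarrow> bool" where
  "wf_tm M \<longleftrightarrow> finite (tm_states M) \<and> finite (tm_aux M) \<and>
     tm_start M \<in> tm_states M \<and> tm_final M \<subseteq> tm_states M \<and>
     (\<forall>q \<in> tm_states M - tm_final M. \<forall>a \<in> tm_alphabet M.
        (case tm_delta M q a of (q', b, d) \<Rightarrow>
           q' \<in> tm_states M \<and> b \<in> tm_alphabet M \<and> d \<in> {-1, 0, 1} \<and>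
           (a = LeftEnd \<longrightarrow> b = LeftEnd \<and> d \<noteq> -1) \<and>
           (a \<noteq> LeftEnd \<longrightarrow> b \<noteq> LeftEnd)))"

type_synonym 'a config = "nat \<times> (nat \<Rightarrow> 'a tsym) \<times> nat"
  \<comment> \<open>(state, tape contents, head position); cell 0 holds the left-end marker\<close>

definition tm_step :: "'a tm \<Rightarrow> 'a config \<Rightarrow> 'a config" where
  "tm_step M c = (case c of (q, tp, p) \<Rightarrow>
     if q \<in> tm_final M then c
     else (case tm_delta M q (tp p) of (q', b, d) \<Rightarrow>
       (q', tp(p := b), nat (int p + d))))"

definition tape_of :: "'a tsym list \<Rightarrow> nat \<Rightarrow> 'a tsym" where
  "tape_of y = (\<lambda>i. if i = 0 then LeftEnd else if i \<le> length y then y ! (i - 1) else Blank)"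

definition init_config :: "'a tm \<Rightarrow> 'a list \<Rightarrow> 'a config" where
  "init_config M x = (tm_start M, tape_of (map Sym x), 0)"

definition sigma_part :: "'a tsym list \<Rightarrow> 'a list" where
  "sigma_part y = concat (map (\<lambda>s. case s of Sym a \<Rightarrow> [a] | _ \<Rightarrow> []) y)"

definition tm_computes_within :: "'a tm \<Rightarrow> real \<Rightarrow> 'a list \<Rightarrow> 'a list \<Rightarrow> bool" where
  "tm_computes_within M T x z \<longleftrightarrow>
     (\<exists>t::nat. real t \<le> T \<and>
        (case (tm_step M ^^ t) (init_config M x) of (q, tp, p) \<Rightarrow>
          q \<in> tm_final M \<and>
          (\<exists>y. (y = [] \<or> last y \<noteq> Blank) \<and> tp = tape_of y \<and> z = sigma_part y)))"

definition tm_computes_in_time :: "'a tm \<Rightarrow> (nat \<Rightarrow> real) \<Rightarrow> ('a list \<Rightarrow> 'a list) \<Rightarrow> bool" where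
  "tm_computes_in_time M T f \<longleftrightarrow>
     wf_tm M \<and> (\<forall>x. tm_computes_within M (T (length x)) x (f x))"

definition word_prod :: "('g, 'b) monoid_scheme \<Rightarrow> 'g list \<Rightarrow> 'g" where
  "word_prod G ws = foldr (\<lambda>a b. a \<otimes>\<^bsub>G\<^esub> b) ws \<one>\<^bsub>G\<^esub>"

definition semigroup_generates :: "('g, 'b) monoid_scheme \<Rightarrow> 'g set \<Rightarrow> bool" where
  "semigroup_generates G S \<longleftrightarrow> S \<subseteq> carrier G \<and>
     carrier G = {word_prod G ws | ws. ws \<noteq> [] \<and> set ws \<subseteq> S}"

definition word_length :: "('g, 'b) monoid_scheme \<Rightarrow> 'g set \<Rightarrow> 'g \<Rightarrow> nat" where
  "word_length G S g = (LEAST n. \<exists>ws. set ws \<subseteq> S \<and> length ws = n \<and> word_prod G ws = g)"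

end

(* A one-tape machine running in time o(n log n) moves its head at most a constant number R of
   cells beyond its input.  Otherwise take a shortest input x on which the head reaches cell
   |x| + R.  If the crossing sequences of two boundaries i < j <= |x| agreed, the run on x with the
   segment between i and j cut out would still reach |x'| + R, contradicting minimality; so the
   |x| + 1 crossing sequences inside the input are pairwise distinct.  Their total length is at
   most the running time, whereas n + 1 distinct sequences over a fixed finite set of states have
   total length of order n log n.  Hence |f_s(w)| <= |w| + K for every generator s, and walking
   along a geodesic word for g from the normal form of the identity gives |w| <= |w_1| + K d_S(g). *)

theory Submission
  imports Defs
begin

definition run :: "'a tm \<Rightarrow> 'a list \<Rightarrow> nat \<Rightarrow> 'a config" where
  "run M x t = (tm_step M ^^ t) (init_config M x)"

abbreviation run_state :: "'a tm \<Rightarrow> 'a list \<Rightarrow> nat \<Rightarrow> nat" where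
  "run_state M x t \<equiv> fst (run M x t)"

abbreviation run_tape :: "'a tm \<Rightarrow> 'a list \<Rightarrow> nat \<Rightarrow> nat \<Rightarrow> 'a tsym" where
  "run_tape M x t \<equiv> fst (snd (run M x t))"

abbreviation run_head :: "'a tm \<Rightarrow> 'a list \<Rightarrow> nat \<Rightarrow> nat" where
  "run_head M x t \<equiv> snd (snd (run M x t))"

lemma run_0: "run M x 0 = (tm_start M, tape_of (map Sym x), 0)"
  by (simp add: run_def init_config_def)

lemma run_Suc: "run M x (Suc t) = tm_step M (run M x t)"
  by (simp add: run_def)

lemma tm_computes_within_iff_run:
  "tm_computes_within M T x z \<longleftrightarrow>
     (\<exists>t. real t \<le> T \<and> run_state M x t \<in> tm_final M \<and>
        (\<exists>y. (y = [] \<or> last y \<noteq> Blank) \<and> run_tape M x t = tape_of y \<and> z = sigma_part y))"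
  by (simp add: tm_computes_within_def run_def split_beta)

lemma tm_step_halted: "fst c \<in> tm_final M \<Longrightarrow> tm_step M c = c"
  by (cases c) (simp add: tm_step_def)

lemma wf_tm_delta:
  assumes "wf_tm M" "q \<in> tm_states M - tm_final M" "a \<in> tm_alphabet M"
    and "tm_delta M q a = (q', b, d)"
  shows "q' \<in> tm_states M \<and> b \<in> tm_alphabet M \<and> d \<in> {-1, 0, 1}"
proof -
  have "\<forall>q \<in> tm_states M - tm_final M. \<forall>a \<in> tm_alphabet M.
     (case tm_delta M q a of (q', b, d) \<Rightarrow>
        q' \<in> tm_states M \<and> b \<in> tm_alphabet M \<and> d \<in> {-1, 0, 1} \<and>
        (a = LeftEnd \<longrightarrow> b = LeftEnd \<and> d \<noteq> -1) \<and> (a \<noteq> LeftEnd \<longrightarrow> b \<noteq> LeftEnd))"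
    using assms(1) unfolding wf_tm_def by (elim conjE)
  from bspec[OF bspec[OF this assms(2)] assms(3)] show ?thesis
    using assms(4) by simp
qed

lemma tm_step_wf:
  assumes wf: "wf_tm M" and q: "q \<in> tm_states M" and tp: "range tp \<subseteq> tm_alphabet M"
    and step: "tm_step M (q, tp, p) = (q', tp', p')"
  shows "q' \<in> tm_states M \<and> range tp' \<subseteq> tm_alphabet M \<and> p' \<le> Suc p \<and> p \<le> Suc p'"
proof (cases "q \<in> tm_final M")
  case True
  then show ?thesis using q tp step by (simp add: tm_step_def)
next
  case False
  obtain q'' b d where delta: "tm_delta M q (tp p) = (q'', b, d)"
    by (metis prod_cases3)
  have "q'' \<in> tm_states M" "b \<in> tm_alphabet M" "d \<in> {-1, 0, 1}"
    using wf_tm_delta[OF wf _ _ delta] q False tp by blast+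
  moreover have "q' = q''" "tp' = tp(p := b)" "p' = nat (int p + d)"
    using step False delta by (simp_all add: tm_step_def)
  ultimately show ?thesis
    using tp by auto
qed

lemma run_halted:
  assumes "run_state M x t \<in> tm_final M" "t \<le> u"
  shows "run M x u = run M x t"
  using assms(2)
proof (induction u rule: dec_induct)
  case (step u)
  then show ?case using assms(1) by (simp add: run_Suc tm_step_halted)
qed simp

lemma run_wf:
  assumes "wf_tm M"
  shows "run_state M x t \<in> tm_states M \<and> range (run_tape M x t) \<subseteq> tm_alphabet M"
proof (induction t)
  case 0
  have "tm_start M \<in> tm_states M" using assms by (simp add: wf_tm_def)
  then show ?case by (auto simp: run_0 tape_of_def tm_alphabet_def)
next
  case (Suc t)
  then show ?case
    using tm_step_wf[OF assms, of "run_state M x t" "run_tape M x t" "run_head M x t"]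
    by (cases "run M x (Suc t)") (simp add: run_Suc)
qed

lemma run_head_Suc:
  assumes "wf_tm M"
  shows "run_head M x (Suc t) \<le> Suc (run_head M x t) \<and> run_head M x t \<le> Suc (run_head M x (Suc t))"
  using run_wf[OF assms, of x t]
    tm_step_wf[OF assms, of "run_state M x t" "run_tape M x t" "run_head M x t"]
  by (cases "run M x (Suc t)") (simp add: run_Suc)

lemma run_head_le_time:
  assumes "wf_tm M"
  shows "run_head M x t \<le> t"
proof (induction t)
  case (Suc t)
  then show ?case using run_head_Suc[OF assms, of x t] by linarith
qed (simp add: run_0)

lemma run_tape_Suc_other:
  assumes "k \<noteq> run_head M x t"
  shows "run_tape M x (Suc t) k = run_tape M x t k"
  using assms by (cases "run M x t") (simp add: run_Suc tm_step_def split: prod.split)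

lemma run_tape_unvisited:
  assumes "t1 \<le> t2" and unvisited: "\<And>u. t1 \<le> u \<Longrightarrow> u < t2 \<Longrightarrow> run_head M x u \<noteq> k"
  shows "run_tape M x t2 k = run_tape M x t1 k"
  using assms(1)
proof (induction t2 rule: dec_induct)
  case (step u)
  then show ?case using unvisited[of u] run_tape_Suc_other[of k M x u] by simp
qed simp

section \<open>Crossing sequences\<close>

definition crosses :: "'a tm \<Rightarrow> 'a list \<Rightarrow> nat \<Rightarrow> nat \<Rightarrow> bool" where
  "crosses M x b u \<longleftrightarrow>
     (run_head M x u = b \<and> run_head M x (Suc u) = Suc b) \<or>
     (run_head M x u = Suc b \<and> run_head M x (Suc u) = b)"

text \<open>Boundary b separates the cells b and Suc b; the crossing sequence of b is the value of
  crossing_states at the halting time.\<close>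

primrec crossing_states :: "'a tm \<Rightarrow> 'a list \<Rightarrow> nat \<Rightarrow> nat \<Rightarrow> nat list" where
  "crossing_states M x b 0 = []"
| "crossing_states M x b (Suc t) =
     crossing_states M x b t @ (if crosses M x b t then [run_state M x (Suc t)] else [])"

lemma length_crossing_states_Suc:
  "length (crossing_states M x b (Suc t)) = length (crossing_states M x b t) + of_bool (crosses M x b t)"
  by simp

lemma length_crossing_states_mono:
  "t1 \<le> t2 \<Longrightarrow> length (crossing_states M x b t1) \<le> length (crossing_states M x b t2)"
  by (induction t2 rule: dec_induct) auto

lemma length_crossing_states_const:
  assumes "length (crossing_states M x b t1) = m" "length (crossing_states M x b t2) = m" "t1 \<le> u" "u \<le> t2"
  shows "length (crossing_states M x b u) = m"
  using length_crossing_states_mono[OF assms(3), of M x b] length_crossing_states_mono[OF assms(4), of M x b]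
    assms(1,2) by simp

lemma length_crossing_states_after_crossing:
  assumes "crosses M x b u" "length (crossing_states M x b v) = Suc (length (crossing_states M x b u))"
  shows "Suc u \<le> v"
  using length_crossing_states_mono[of v u M x b] assms(2) by (cases "Suc u \<le> v") auto

lemma nth_crossing_states:
  assumes "m < length (crossing_states M x b t)"
  shows "\<exists>u < t. crosses M x b u \<and> length (crossing_states M x b u) = m \<and>
           crossing_states M x b t ! m = run_state M x (Suc u)"
  using assms
proof (induction t)
  case (Suc t)
  show ?case
  proof (cases "m < length (crossing_states M x b t)")
    case True
    then show ?thesis using Suc.IH by (auto simp: nth_append less_Suc_eq)
  next
    case False
    then show ?thesis using Suc.prems by (intro exI[of _ t]) (auto simp: nth_append split: if_splits)
  qed
qed simp

lemma crossing_states_halted: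
  assumes "run_state M x t0 \<in> tm_final M" "t0 \<le> t"
  shows "crossing_states M x b t = crossing_states M x b t0"
  using assms(2)
proof (induction t rule: dec_induct)
  case (step u)
  then have "run M x (Suc u) = run M x u"
    using run_halted[OF assms(1)] by (metis le_SucI)
  then have "\<not> crosses M x b u" by (auto simp: crosses_def)
  then show ?case using step.IH by simp
qed simp

lemma length_crossing_states_le_halted:
  assumes "run_state M x t0 \<in> tm_final M"
  shows "length (crossing_states M x b t) \<le> length (crossing_states M x b t0)"
  using crossing_states_halted[OF assms, of t b] length_crossing_states_mono[of t t0 M x b]
  by (cases "t \<le> t0") auto

lemma run_head_le_iff_even_crossings:
  assumes "wf_tm M"
  shows "run_head M x t \<le> b \<longleftrightarrow> even (length (crossing_states M x b t))"
proof (induction t)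
  case 0
  then show ?case by (simp add: run_0)
next
  case (Suc t)
  have step: "run_head M x (Suc t) \<le> Suc (run_head M x t)" "run_head M x t \<le> Suc (run_head M x (Suc t))"
    using run_head_Suc[OF assms] by auto
  show ?case
  proof (cases "crosses M x b t")
    case True
    then have "run_head M x t \<le> b \<longleftrightarrow> \<not> run_head M x (Suc t) \<le> b"
      unfolding crosses_def by linarith
    then show ?thesis using Suc.IH True by simp
  next
    case False
    then have "run_head M x t \<le> b \<longleftrightarrow> run_head M x (Suc t) \<le> b"
      using step unfolding crosses_def by linarith
    then show ?thesis using Suc.IH False by simp
  qed
qed

lemma crosses_even:
  assumes "wf_tm M" "crosses M x b u" "even (length (crossing_states M x b u))"
  shows "run_head M x u = b \<and> run_head M x (Suc u) = Suc b"
  using assms(2,3) run_head_le_iff_even_crossings[OF assms(1), of x u b] unfolding crosses_def by linarith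

lemma crosses_odd:
  assumes "wf_tm M" "crosses M x b u" "odd (length (crossing_states M x b u))"
  shows "run_head M x u = Suc b \<and> run_head M x (Suc u) = b"
  using assms(2,3) run_head_le_iff_even_crossings[OF assms(1), of x u b] unfolding crosses_def by linarith

lemma sum_length_crossing_states_le:
  "(\<Sum>b\<le>n. length (crossing_states M x b t)) \<le> t"
proof (induction t)
  case (Suc t)
  have unique: "b1 = b2" if "crosses M x b1 t" "crosses M x b2 t" for b1 b2
    using that unfolding crosses_def by linarith
  have "card ({..n} \<inter> {b. crosses M x b t}) \<le> Suc 0"
    using unique by (subst card_le_Suc0_iff_eq) auto
  then have "(\<Sum>b\<le>n. of_bool (crosses M x b t) :: nat) \<le> 1" by simp
  moreover have "(\<Sum>b\<le>n. length (crossing_states M x b (Suc t))) =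
      (\<Sum>b\<le>n. length (crossing_states M x b t)) + (\<Sum>b\<le>n. of_bool (crosses M x b t))"
    by (simp only: length_crossing_states_Suc sum.distrib)
  ultimately show ?case using Suc.IH by linarith
qed simp

section \<open>Cutting a segment out of the input\<close>

definition splice_tape :: "nat \<Rightarrow> nat \<Rightarrow> (nat \<Rightarrow> 'b) \<Rightarrow> (nat \<Rightarrow> 'b) \<Rightarrow> nat \<Rightarrow> 'b" where
  "splice_tape i D tL tR k = (if k \<le> i then tL k else tR (k + D))"

lemma tape_of_take_drop:
  assumes "i < j" "j \<le> length x"
  shows "tape_of (map Sym (take i x @ drop j x)) =
           splice_tape i (j - i) (tape_of (map Sym x)) (tape_of (map Sym x))"
proof
  fix k
  show "tape_of (map Sym (take i x @ drop j x)) k =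
          splice_tape i (j - i) (tape_of (map Sym x)) (tape_of (map Sym x)) k"
    using assms by (cases "k \<le> i") (auto simp: tape_of_def splice_tape_def nth_append ac_simps)
qed

lemma tm_step_splice_left:
  assumes "p \<le> i"
  shows "tm_step M (q, splice_tape i D tp tR, p) =
           (case tm_step M (q, tp, p) of (q', tp', p') \<Rightarrow> (q', splice_tape i D tp' tR, p'))"
proof -
  obtain q' b d where delta: "tm_delta M q (tp p) = (q', b, d)"
    by (metis prod_cases3)
  have "splice_tape i D tp tR p = tp p"
    using assms by (simp add: splice_tape_def)
  moreover have "splice_tape i D (tp(p := b)) tR = (splice_tape i D tp tR)(p := b)"
    using assms by (auto simp: splice_tape_def fun_eq_iff)
  ultimately show ?thesis
    using delta by (simp add: tm_step_def)
qed

lemma tm_step_splice_right: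
  assumes "i + D < p"
  shows "tm_step M (q, splice_tape i D tL tp, p - D) =
           (case tm_step M (q, tp, p) of (q', tp', p') \<Rightarrow> (q', splice_tape i D tL tp', p' - D))"
proof -
  obtain q' b d where delta: "tm_delta M q (tp p) = (q', b, d)"
    by (metis prod_cases3)
  have "\<not> p - D \<le> i" "p - D + D = p"
    using assms by linarith+
  then have "splice_tape i D tL tp (p - D) = tp p"
    by (simp add: splice_tape_def)
  moreover have "splice_tape i D tL (tp(p := b)) = (splice_tape i D tL tp)(p - D := b)"
    using assms by (auto simp: splice_tape_def fun_eq_iff)
  moreover have "nat (int (p - D) + d) = nat (int p + d) - D"
    using assms by linarith
  ultimately show ?thesis
    using delta by (simp add: tm_step_def)
qed

lemma run_simulation:
  assumes "t1 \<le> t2"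
    and commute: "\<And>u. t1 \<le> u \<Longrightarrow> u < t2 \<Longrightarrow> tm_step M (F (run M x u)) = F (run M x (Suc u))"
    and start: "run M y s = F (run M x t1)"
  shows "run M y (s + (t2 - t1)) = F (run M x t2)"
  using assms(1)
proof (induction t2 rule: dec_induct)
  case base
  then show ?case using start by simp
next
  case (step u)
  then have "s + (Suc u - t1) = Suc (s + (u - t1))" by simp
  then show ?case using step commute[of u] by (simp add: run_Suc)
qed

lemma run_splice_left:
  assumes "t1 \<le> t2" "\<And>u. t1 \<le> u \<Longrightarrow> u < t2 \<Longrightarrow> run_head M x u \<le> i"
    and "run M y s = (run_state M x t1, splice_tape i D (run_tape M x t1) tR, run_head M x t1)"
  shows "run M y (s + (t2 - t1)) =
           (run_state M x t2, splice_tape i D (run_tape M x t2) tR, run_head M x t2)"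
  by (rule run_simulation[where F = "\<lambda>c. (fst c, splice_tape i D (fst (snd c)) tR, snd (snd c))"])
    (use assms in \<open>auto simp: run_Suc tm_step_splice_left split: prod.split\<close>)

lemma run_splice_right:
  assumes "t1 \<le> t2" "\<And>u. t1 \<le> u \<Longrightarrow> u < t2 \<Longrightarrow> i + D < run_head M x u"
    and "run M y s = (run_state M x t1, splice_tape i D tL (run_tape M x t1), run_head M x t1 - D)"
  shows "run M y (s + (t2 - t1)) =
           (run_state M x t2, splice_tape i D tL (run_tape M x t2), run_head M x t2 - D)"
  by (rule run_simulation[where F = "\<lambda>c. (fst c, splice_tape i D tL (fst (snd c)), snd (snd c) - D)"])
    (use assms in \<open>auto simp: run_Suc tm_step_splice_right split: prod.split\<close>)

locale crossing_cut =
  fixes M :: "'a tm" and x :: "'a list" and i j t0 :: nat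
  assumes wf: "wf_tm M"
    and halted: "run_state M x t0 \<in> tm_final M"
    and boundaries: "i < j" "j \<le> length x"
    and same_crossings: "crossing_states M x i t0 = crossing_states M x j t0"
begin

abbreviation gap :: nat where
  "gap \<equiv> j - i"

abbreviation x_cut :: "'a list" where
  "x_cut \<equiv> take i x @ drop j x"

abbreviation crossings :: "nat \<Rightarrow> nat \<Rightarrow> nat" where
  "crossings b t \<equiv> length (crossing_states M x b t)"

text \<open>The run on x_cut at time s is the run on x glued together from its left part at time tL and
  its right part at time tR, where tL and tR are the first times after m crossings of boundaries
  i and j; the head is on the left part iff m is even.\<close>

definition synced :: "nat \<Rightarrow> nat \<Rightarrow> nat \<Rightarrow> nat \<Rightarrow> bool" where
  "synced m s tL tR \<longleftrightarrow>
     crossings i tL = m \<and> (\<forall>u. crossings i u = m \<longrightarrow> tL \<le> u) \<and>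
     crossings j tR = m \<and> (\<forall>u. crossings j u = m \<longrightarrow> tR \<le> u) \<and>
     run M x_cut s =
       (if even m
        then (run_state M x tL, splice_tape i gap (run_tape M x tL) (run_tape M x tR), run_head M x tL)
        else (run_state M x tR, splice_tape i gap (run_tape M x tL) (run_tape M x tR),
              run_head M x tR - gap))"

lemma synced_0: "synced 0 0 0 0"
  using tape_of_take_drop[OF boundaries] by (simp add: synced_def run_0)

lemma crossings_after_crossing:
  assumes "crosses M x b u"
  shows "crossings b (Suc u) = Suc (crossings b u)"
    and "\<forall>v. crossings b v = Suc (crossings b u) \<longrightarrow> Suc u \<le> v"
  using assms length_crossing_states_after_crossing[OF assms] by auto

lemma synced_Suc_even:
  assumes sync: "synced m s tL tR" and "even m"
    and ui: "crosses M x i ui" "crossings i ui = m"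
    and uj: "crosses M x j uj" "crossings j uj = m"
    and same_state: "run_state M x (Suc ui) = run_state M x (Suc uj)"
  shows "synced (Suc m) (s + (Suc ui - tL)) (Suc ui) (Suc uj)"
proof -
  have tL: "crossings i tL = m" "tL \<le> ui" and tR: "crossings j tR = m" "tR \<le> uj"
    using sync ui(2) uj(2) by (auto simp: synced_def)
  have start: "run M x_cut s =
      (run_state M x tL, splice_tape i gap (run_tape M x tL) (run_tape M x tR), run_head M x tL)"
    using sync \<open>even m\<close> by (simp add: synced_def)
  have "run_head M x u \<le> i" if "tL \<le> u" "u \<le> ui" for u
    using length_crossing_states_const[OF tL(1) ui(2) that] \<open>even m\<close>
      run_head_le_iff_even_crossings[OF wf, of x u i] by simp
  then have left: "run M x_cut (s + (Suc ui - tL)) = (run_state M x (Suc ui),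
      splice_tape i gap (run_tape M x (Suc ui)) (run_tape M x tR), run_head M x (Suc ui))"
    using run_splice_left[OF _ _ start, of "Suc ui"] tL(2) by simp
  have "run_head M x u \<le> j" if "tR \<le> u" "u \<le> uj" for u
    using length_crossing_states_const[OF tR(1) uj(2) that] \<open>even m\<close>
      run_head_le_iff_even_crossings[OF wf, of x u j] by simp
  then have "run_tape M x (Suc uj) k = run_tape M x tR k" if "j < k" for k
    using run_tape_unvisited[of tR "Suc uj" M x k] tR(2) that by fastforce
  then have "splice_tape i gap (run_tape M x (Suc ui)) (run_tape M x tR) =
      splice_tape i gap (run_tape M x (Suc ui)) (run_tape M x (Suc uj))"
    using boundaries by (auto simp: splice_tape_def fun_eq_iff)
  moreover have "run_head M x (Suc ui) = Suc i" "run_head M x (Suc uj) = Suc j"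
    using crosses_even[OF wf ui(1)] crosses_even[OF wf uj(1)] ui(2) uj(2) \<open>even m\<close> by auto
  ultimately show ?thesis
    using left same_state \<open>even m\<close> boundaries crossings_after_crossing[OF ui(1)] crossings_after_crossing[OF uj(1)]
      ui(2) uj(2) by (simp add: synced_def)
qed

lemma synced_Suc_odd:
  assumes sync: "synced m s tL tR" and "odd m"
    and ui: "crosses M x i ui" "crossings i ui = m"
    and uj: "crosses M x j uj" "crossings j uj = m"
    and same_state: "run_state M x (Suc ui) = run_state M x (Suc uj)"
  shows "synced (Suc m) (s + (Suc uj - tR)) (Suc ui) (Suc uj)"
proof -
  have tL: "crossings i tL = m" "tL \<le> ui" and tR: "crossings j tR = m" "tR \<le> uj"
    using sync ui(2) uj(2) by (auto simp: synced_def)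
  have start: "run M x_cut s =
      (run_state M x tR, splice_tape i gap (run_tape M x tL) (run_tape M x tR), run_head M x tR - gap)"
    using sync \<open>odd m\<close> by (simp add: synced_def)
  have "i + gap < run_head M x u" if "tR \<le> u" "u \<le> uj" for u
    using length_crossing_states_const[OF tR(1) uj(2) that] \<open>odd m\<close> boundaries
      run_head_le_iff_even_crossings[OF wf, of x u j] by simp
  then have right: "run M x_cut (s + (Suc uj - tR)) = (run_state M x (Suc uj),
      splice_tape i gap (run_tape M x tL) (run_tape M x (Suc uj)), run_head M x (Suc uj) - gap)"
    using run_splice_right[OF _ _ start, of "Suc uj"] tR(2) by simp
  have "i < run_head M x u" if "tL \<le> u" "u \<le> ui" for u
    using length_crossing_states_const[OF tL(1) ui(2) that] \<open>odd m\<close>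
      run_head_le_iff_even_crossings[OF wf, of x u i] by simp
  then have "run_tape M x (Suc ui) k = run_tape M x tL k" if "k \<le> i" for k
    using run_tape_unvisited[of tL "Suc ui" M x k] tL(2) that by fastforce
  then have "splice_tape i gap (run_tape M x tL) (run_tape M x (Suc uj)) =
      splice_tape i gap (run_tape M x (Suc ui)) (run_tape M x (Suc uj))"
    by (auto simp: splice_tape_def fun_eq_iff)
  moreover have "run_head M x (Suc ui) = i" "run_head M x (Suc uj) = j"
    using crosses_odd[OF wf ui(1)] crosses_odd[OF wf uj(1)] ui(2) uj(2) \<open>odd m\<close> by auto
  ultimately show ?thesis
    using right same_state \<open>odd m\<close> boundaries crossings_after_crossing[OF ui(1)] crossings_after_crossing[OF uj(1)]
      ui(2) uj(2) by (simp add: synced_def)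
qed

lemma synced_exists:
  assumes "m \<le> length (crossing_states M x i t0)"
  shows "\<exists>s tL tR. synced m s tL tR"
  using assms
proof (induction m)
  case 0
  then show ?case using synced_0 by blast
next
  case (Suc m)
  then obtain s tL tR where sync: "synced m s tL tR"
    by auto
  obtain ui where ui: "crosses M x i ui" "crossings i ui = m"
      "crossing_states M x i t0 ! m = run_state M x (Suc ui)"
    using nth_crossing_states[of m M x i t0] Suc.prems by auto
  obtain uj where uj: "crosses M x j uj" "crossings j uj = m"
      "crossing_states M x j t0 ! m = run_state M x (Suc uj)"
    using nth_crossing_states[of m M x j t0] Suc.prems same_crossings by auto
  have same_state: "run_state M x (Suc ui) = run_state M x (Suc uj)"
    using ui(3) uj(3) same_crossings by simp
  show ?case
    using synced_Suc_even[OF sync _ ui(1,2) uj(1,2) same_state]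
      synced_Suc_odd[OF sync _ ui(1,2) uj(1,2) same_state]
    by (cases "even m") blast+
qed

lemma cut_head_reaches:
  assumes "j < run_head M x tX"
  shows "\<exists>s. run_head M x_cut s + gap = run_head M x tX"
proof -
  define m where "m = crossings j tX"
  have "odd m"
    using run_head_le_iff_even_crossings[OF wf, of x tX j] assms by (simp add: m_def)
  have "m \<le> length (crossing_states M x i t0)"
    using length_crossing_states_le_halted[OF halted, of j tX] same_crossings by (simp add: m_def)
  then obtain s tL tR where sync: "synced m s tL tR"
    using synced_exists by blast
  then have tR: "crossings j tR = m" "tR \<le> tX"
    and start: "run M x_cut s = (run_state M x tR,
      splice_tape i gap (run_tape M x tL) (run_tape M x tR), run_head M x tR - gap)"
    using \<open>odd m\<close> by (auto simp: synced_def m_def)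
  have "i + gap < run_head M x u" if "tR \<le> u" "u < tX" for u
    using length_crossing_states_const[OF tR(1) m_def[symmetric], of u] that \<open>odd m\<close> boundaries
      run_head_le_iff_even_crossings[OF wf, of x u j] by simp
  then have "run M x_cut (s + (tX - tR)) = (run_state M x tX,
      splice_tape i gap (run_tape M x tL) (run_tape M x tX), run_head M x tX - gap)"
    by (rule run_splice_right[OF tR(2) _ start])
  then show ?thesis
    using assms by (intro exI[of _ "s + (tX - tR)"]) simp
qed

end

section \<open>Counting crossing sequences\<close>

lemma sum_powers_le_Suc_power: "(\<Sum>i\<le>k. (q::nat) ^ i) \<le> (q + 1) ^ Suc k"
proof (induction k)
  case (Suc k)
  have "q ^ k \<le> (q + 1) ^ Suc k"
    by (rule order_trans[OF power_mono[of q "q + 1"]]) auto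
  then have "q ^ Suc k \<le> q * (q + 1) ^ Suc k"
    by (simp add: mult_left_mono)
  have "(\<Sum>i\<le>Suc k. q ^ i) = (\<Sum>i\<le>k. q ^ i) + q ^ Suc k"
    by simp
  also have "\<dots> \<le> (q + 1) ^ Suc k + q * (q + 1) ^ Suc k"
    using Suc.IH \<open>q ^ Suc k \<le> _\<close> by (rule add_mono)
  also have "\<dots> = (q + 1) ^ Suc (Suc k)"
    by simp
  finally show ?case .
qed simp

lemma card_lists_shorter_le:
  assumes "finite Q"
  shows "card {xs. set xs \<subseteq> Q \<and> length xs < l} \<le> (card Q + 1) ^ l"
proof (cases l)
  case (Suc k)
  then have "{xs. set xs \<subseteq> Q \<and> length xs < l} = {xs. set xs \<subseteq> Q \<and> length xs \<le> k}"
    by auto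
  then show ?thesis
    using card_lists_length_le[OF assms, of k] sum_powers_le_Suc_power[where k = k and q = "card Q"] Suc
    by simp
qed simp

lemma sum_length_lists_ge:
  assumes Q: "finite Q" and A: "finite A" "\<forall>xs\<in>A. set xs \<subseteq> Q"
  shows "real l * (real (card A) - real (card Q + 1) ^ l) \<le> real (\<Sum>xs\<in>A. length xs)"
proof -
  define short where "short = {xs \<in> A. length xs < l}"
  define long where "long = {xs \<in> A. l \<le> length xs}"
  have "short \<subseteq> {xs. set xs \<subseteq> Q \<and> length xs < l}"
    using A by (auto simp: short_def)
  moreover have "finite {xs. set xs \<subseteq> Q \<and> length xs < l}"
    by (rule finite_subset[OF _ finite_lists_length_le[OF Q, of l]]) auto
  ultimately have "card short \<le> (card Q + 1) ^ l"
    using card_mono card_lists_shorter_le[OF Q, of l] by (blast intro: order_trans)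
  moreover have "card A = card short + card long"
    using A by (subst card_Un_disjoint[symmetric]) (auto simp: short_def long_def intro: arg_cong[of _ _ card])
  ultimately have "real (card A) \<le> real ((card Q + 1) ^ l + card long)"
    by (simp only: of_nat_le_iff)
  then have "real l * (real (card A) - real (card Q + 1) ^ l) \<le> real l * real (card long)"
    by (intro mult_left_mono) auto
  also have "\<dots> = (\<Sum>xs\<in>long. real l)"
    by simp
  also have "\<dots> \<le> (\<Sum>xs\<in>long. real (length xs))"
    by (rule sum_mono) (simp add: long_def)
  also have "\<dots> \<le> (\<Sum>xs\<in>A. real (length xs))"
    using A by (intro sum_mono2) (auto simp: long_def)
  finally show ?thesis
    by simp
qed

lemma n_ln_n_bound:
  fixes B n :: nat
  assumes B: "2 \<le> B" and n: "4 \<le> n" "B ^ 4 \<le> n"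
  defines "l \<equiv> nat \<lfloor>ln (real n) / (2 * ln (real B))\<rfloor>"
  shows "real n * ln (real n) / (8 * ln (real B)) \<le> real l * (real n + 1 - real B ^ l)"
proof -
  define L where "L = ln (real n) / (2 * ln (real B))"
  have lnB: "0 < ln (real B)" using B by simp
  have npos: "0 < real n" using n by simp
  have "ln (real B ^ 4) \<le> ln (real n)"
    using n B by (subst ln_le_cancel_iff) (auto simp flip: of_nat_power)
  then have "4 * ln (real B) \<le> ln (real n)" by (simp add: ln_realpow)
  then have L2: "2 \<le> L" unfolding L_def using lnB by (simp add: field_simps)
  have lL: "real l \<le> L" "L / 2 \<le> real l" unfolding l_def L_def[symmetric] using L2 by linarith+
  have "real B ^ l = exp (real l * ln (real B))" using B by (simp add: exp_of_nat_mult)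
  also have "\<dots> \<le> exp (L * ln (real B))" using lL lnB by (simp add: mult_right_mono)
  also have "L * ln (real B) = ln (real n) / 2" unfolding L_def using lnB by (simp add: field_simps)
  also have "exp (ln (real n) / 2) = sqrt (real n)"
    using npos by (simp add: powr_def flip: powr_half_sqrt)
  finally have "real B ^ l \<le> sqrt (real n)" .
  moreover have "2 * sqrt (real n) \<le> real n"
  proof -
    have "2 \<le> sqrt (real n)" using n by (simp add: real_le_rsqrt)
    then have "2 * sqrt (real n) \<le> sqrt (real n) * sqrt (real n)" by (intro mult_right_mono) auto
    then show ?thesis by simp
  qed
  ultimately have "real n / 2 \<le> real n + 1 - real B ^ l" by linarith
  have "real n * ln (real n) / (8 * ln (real B)) = (L / 2) * (real n / 2)"
    unfolding L_def using lnB by (simp add: field_simps)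
  also have "\<dots> \<le> real l * (real n + 1 - real B ^ l)"
    using lL \<open>real n / 2 \<le> _\<close> L2 npos by (intro mult_mono) auto
  finally show ?thesis .
qed

lemma sum_length_distinct_lists_ge:
  assumes "finite Q" "Q \<noteq> {}" "finite A" "\<forall>xs\<in>A. set xs \<subseteq> Q" "card A = Suc n"
    and "4 \<le> n" "(card Q + 1) ^ 4 \<le> n"
  shows "real n * ln (real n) / (8 * ln (real (card Q + 1))) \<le> real (\<Sum>xs\<in>A. length xs)"
proof -
  define l where "l = nat \<lfloor>ln (real n) / (2 * ln (real (card Q + 1)))\<rfloor>"
  have "2 \<le> card Q + 1" using assms(1,2) by (simp add: Suc_leI card_gt_0_iff)
  then have "real n * ln (real n) / (8 * ln (real (card Q + 1))) \<le> real l * (real n + 1 - real (card Q + 1) ^ l)"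
    using n_ln_n_bound[of "card Q + 1" n] assms(6,7) unfolding l_def by simp
  also have "\<dots> \<le> real (\<Sum>xs\<in>A. length xs)"
    using sum_length_lists_ge[OF assms(1,3,4), of l] assms(5) by (simp add: ac_simps)
  finally show ?thesis .
qed

lemma running_time_ge_if_crossing_states_distinct:
  assumes wf: "wf_tm M" and distinct: "inj_on (\<lambda>b. crossing_states M x b t) {..n}"
    and "4 \<le> n" "(card (tm_states M) + 1) ^ 4 \<le> n"
  shows "real n * ln (real n) / (8 * ln (real (card (tm_states M) + 1))) \<le> real t"
proof -
  define A where "A = (\<lambda>b. crossing_states M x b t) ` {..n}"
  have states: "finite (tm_states M)" "tm_states M \<noteq> {}"
    using wf by (auto simp: wf_tm_def)
  have "set xs \<subseteq> tm_states M" if "xs \<in> A" for xs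
  proof -
    have "set (crossing_states M x b t) \<subseteq> tm_states M" for b
      using run_wf[OF wf] by (induction t) auto
    then show ?thesis using that by (auto simp: A_def)
  qed
  moreover have "card A = Suc n"
    using card_image[OF distinct] by (simp add: A_def)
  ultimately have "real n * ln (real n) / (8 * ln (real (card (tm_states M) + 1))) \<le> real (\<Sum>xs\<in>A. length xs)"
    using sum_length_distinct_lists_ge[OF states, of A n] assms(3,4) by (simp add: A_def)
  also have "(\<Sum>xs\<in>A. length xs) = (\<Sum>b\<le>n. length (crossing_states M x b t))"
    using sum.reindex[OF distinct, of length] by (simp add: A_def)
  also have "\<dots> \<le> t"
    by (rule sum_length_crossing_states_le)
  finally show ?thesis
    by simp
qed

lemma run_head_le_halting_time:
  assumes "wf_tm M" "run_state M x t0 \<in> tm_final M"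
  shows "run_head M x t \<le> t0"
proof (cases "t \<le> t0")
  case True
  then show ?thesis using run_head_le_time[OF assms(1), of x t] by simp
next
  case False
  then show ?thesis using run_halted[OF assms(2), of t] run_head_le_time[OF assms(1), of x t0] by simp
qed

lemma crossing_states_inj_if_minimal:
  assumes wf: "wf_tm M" and halted: "run_state M x t0 \<in> tm_final M"
    and "0 < R" and far: "length x + R \<le> run_head M x tX"
    and minimal: "\<And>y t. length y < length x \<Longrightarrow> run_head M y t < length y + R"
  shows "inj_on (\<lambda>b. crossing_states M x b t0) {..length x}"
proof (rule linorder_inj_onI')
  fix b1 b2
  assume b: "b1 \<in> {..length x}" "b2 \<in> {..length x}" "b1 < b2"
  show "crossing_states M x b1 t0 \<noteq> crossing_states M x b2 t0"
  proof
    assume "crossing_states M x b1 t0 = crossing_states M x b2 t0"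
    then interpret crossing_cut M x b1 b2 t0
      using wf halted b by unfold_locales auto
    obtain s where "run_head M x_cut s + gap = run_head M x tX"
      using cut_head_reaches[of tX] far \<open>0 < R\<close> b by force
    moreover have "run_head M x_cut s < length x_cut + R"
      by (rule minimal) (use b in simp)
    ultimately show False
      using far b by simp
  qed
qed

lemma run_head_le_time_bound:
  assumes "tm_computes_in_time M T f"
  shows "run_head M x t \<le> nat \<lceil>T (length x)\<rceil>"
proof -
  obtain t0 where t0: "real t0 \<le> T (length x)" "run_state M x t0 \<in> tm_final M"
    using assms by (auto simp: tm_computes_in_time_def tm_computes_within_iff_run)
  have "run_head M x t \<le> t0"
    using assms t0(2) by (intro run_head_le_halting_time) (simp_all add: tm_computes_in_time_def)
  also have "t0 \<le> nat \<lceil>T (length x)\<rceil>"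
    using t0(1) by linarith
  finally show ?thesis .
qed

lemma eventually_less_n_ln_n:
  fixes T :: "nat \<Rightarrow> real"
  assumes "(\<lambda>n. T n / (real n * ln (real n))) \<longlonglongrightarrow> 0" "0 < c"
  shows "\<forall>\<^sub>F n in sequentially. T n < c * (real n * ln (real n))"
proof -
  have "\<forall>\<^sub>F n in sequentially. T n / (real n * ln (real n)) < c \<and> 2 \<le> n"
    using order_tendstoD(2)[OF assms] by (intro eventually_conj eventually_ge_at_top)
  then show ?thesis
  proof (rule eventually_mono)
    fix n
    assume n: "T n / (real n * ln (real n)) < c \<and> 2 \<le> n"
    then have "0 < real n * ln (real n)"
      by simp
    then show "T n < c * (real n * ln (real n))"
      using n by (simp add: divide_less_eq)
  qed
qed

lemma run_head_bounded_if_time_o_n_log_n: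
  assumes comp: "tm_computes_in_time M T f" and lim: "(\<lambda>n. T n / (real n * ln (real n))) \<longlonglongrightarrow> 0"
  shows "\<exists>R. \<forall>x t. run_head M x t < length x + R"
proof -
  have wf: "wf_tm M"
    using comp by (simp add: tm_computes_in_time_def)
  define B where "B = card (tm_states M) + 1"
  have "finite (tm_states M)" "tm_start M \<in> tm_states M"
    using wf by (simp_all add: wf_tm_def)
  then have "0 < ln (real B)"
    by (auto simp: B_def card_gt_0_iff)
  then have "\<forall>\<^sub>F n in sequentially. T n < real n * ln (real n) / (8 * ln (real B)) \<and> 4 \<le> n \<and> B ^ 4 \<le> n"
    using eventually_less_n_ln_n[OF lim, of "1 / (8 * ln (real B))"]
    by (intro eventually_conj eventually_ge_at_top) simp_all
  then obtain N where N: "\<And>n. N \<le> n \<Longrightarrow>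
      T n < real n * ln (real n) / (8 * ln (real B)) \<and> 4 \<le> n \<and> B ^ 4 \<le> n"
    by (auto simp: eventually_sequentially)
  define R where "R = Suc (\<Sum>n<N. nat \<lceil>T n\<rceil>)"
  have "run_head M x t < length x + R" for x t
  proof (induction x arbitrary: t rule: measure_induct_rule[of length])
    case (less x)
    obtain t0 where t0: "real t0 \<le> T (length x)" "run_state M x t0 \<in> tm_final M"
      using comp by (auto simp: tm_computes_in_time_def tm_computes_within_iff_run)
    show ?case
    proof (rule ccontr)
      assume "\<not> ?case"
      then have far: "length x + R \<le> run_head M x t"
        by simp
      have "N \<le> length x"
      proof (rule ccontr)
        assume "\<not> N \<le> length x"
        then have "nat \<lceil>T (length x)\<rceil> \<le> (\<Sum>n<N. nat \<lceil>T n\<rceil>)"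
          by (intro member_le_sum) auto
        then show False
          using far run_head_le_time_bound[OF comp, of x t] unfolding R_def by linarith
      qed
      moreover have "inj_on (\<lambda>b. crossing_states M x b t0) {..length x}"
        using crossing_states_inj_if_minimal[OF wf t0(2) _ far less.IH] by (simp add: R_def)
      ultimately have "real (length x) * ln (real (length x)) / (8 * ln (real B)) \<le> real t0"
        using running_time_ge_if_crossing_states_distinct[OF wf] N by (simp add: B_def)
      then show False
        using t0(1) N[OF \<open>N \<le> length x\<close>] by simp
    qed
  qed
  then show ?thesis
    by blast
qed

lemma length_sigma_part_le: "length (sigma_part y) \<le> length y"
  by (induction y) (auto simp: sigma_part_def split: tsym.split)

lemma output_length_le:
  assumes "tm_computes_within M T x z" and bounded: "\<forall>t. run_head M x t < length x + R"
  shows "length z \<le> length x + R"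
proof -
  obtain t0 y where y: "y = [] \<or> last y \<noteq> Blank" "run_tape M x t0 = tape_of y" "z = sigma_part y"
    using assms(1) by (auto simp: tm_computes_within_iff_run)
  have "length y \<le> length x + R"
  proof (rule ccontr)
    assume "\<not> ?thesis"
    then have long: "length x + R < length y" "y \<noteq> []"
      by auto
    have "run_tape M x t0 (length y) = last y"
      using y(2) long(2) by (simp add: tape_of_def last_conv_nth)
    moreover have "run_tape M x t0 (length y) = run_tape M x 0 (length y)"
    proof (rule run_tape_unvisited)
      fix u
      show "run_head M x u \<noteq> length y"
        using bounded long(1) by (metis less_not_refl less_trans)
    qed simp
    moreover have "run_tape M x 0 (length y) = Blank"
      using long by (simp add: run_0 tape_of_def)
    ultimately show False
      using y(1) long(2) by simp
  qed
  then show ?thesis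
    using length_sigma_part_le[of y] y(3) by simp
qed

lemma output_length_le_input_plus_const:
  assumes "tm_computes_in_time M T f" "(\<lambda>n. T n / (real n * ln (real n))) \<longlonglongrightarrow> 0"
  shows "\<exists>R. \<forall>x. length (f x) \<le> length x + R"
  using run_head_bounded_if_time_o_n_log_n[OF assms] output_length_le assms(1)
  unfolding tm_computes_in_time_def by blast

section \<open>Quasigeodesic normal forms\<close>

lemma word_prod_closed:
  assumes "monoid G" "set ws \<subseteq> carrier G"
  shows "word_prod G ws \<in> carrier G"
  using assms(2)
  by (induction ws) (simp_all add: word_prod_def monoid.one_closed[OF assms(1)] monoid.m_closed[OF assms(1)])

lemma word_prod_snoc:
  assumes "monoid G" "set ws \<subseteq> carrier G" "s \<in> carrier G"
  shows "word_prod G (ws @ [s]) = word_prod G ws \<otimes>\<^bsub>G\<^esub> s"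
  using assms(2)
proof (induction ws)
  case Nil
  then show ?case
    using assms(3) by (simp add: word_prod_def monoid.l_one[OF assms(1)] monoid.r_one[OF assms(1)])
next
  case (Cons a ws)
  then show ?case
    using assms(3) word_prod_closed[OF assms(1), of ws]
    by (simp add: word_prod_def monoid.m_assoc[OF assms(1)])
qed

lemma word_length_attained:
  assumes "semigroup_generates G S" "g \<in> carrier G"
  shows "\<exists>ws. set ws \<subseteq> S \<and> length ws = word_length G S g \<and> word_prod G ws = g"
proof -
  have "\<exists>n ws. set ws \<subseteq> S \<and> length ws = n \<and> word_prod G ws = g"
    using assms by (auto simp: semigroup_generates_def)
  then show ?thesis
    unfolding word_length_def by (rule LeastI_ex)
qed

lemma normal_form_length_le:
  assumes "monoid G" "S \<subseteq> carrier G" "w1 \<in> L" "\<psi> w1 = \<one>\<^bsub>G\<^esub>"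
    and step: "\<And>s w. s \<in> S \<Longrightarrow> w \<in> L \<Longrightarrow> \<exists>w'\<in>L. \<psi> w' = \<psi> w \<otimes>\<^bsub>G\<^esub> s \<and> length w' \<le> length w + K"
    and "set ws \<subseteq> S"
  shows "\<exists>w\<in>L. \<psi> w = word_prod G ws \<and> length w \<le> length w1 + K * length ws"
  using assms(6)
proof (induction ws rule: rev_induct)
  case Nil
  then show ?case
    using assms(3,4) by (auto simp: word_prod_def)
next
  case (snoc s ws)
  then obtain w where w: "w \<in> L" "\<psi> w = word_prod G ws" "length w \<le> length w1 + K * length ws"
    by auto
  obtain w' where w': "w' \<in> L" "\<psi> w' = \<psi> w \<otimes>\<^bsub>G\<^esub> s" "length w' \<le> length w + K"
    using step[of s w] snoc.prems w(1) by auto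
  have "set ws \<subseteq> carrier G" "s \<in> carrier G"
    using snoc.prems assms(2) by auto
  then have "\<psi> w' = word_prod G (ws @ [s])"
    using w'(2) w(2) by (simp add: word_prod_snoc[OF assms(1)])
  moreover have "length w' \<le> length w1 + K * length (ws @ [s])"
    using w(3) w'(3) by simp
  ultimately show ?case
    using w'(1) by blast
qed

lemma uniform_right_multiplication_bound:
  fixes G :: "('g, 'b) monoid_scheme"
  assumes "finite S"
    and "\<forall>s \<in> S. \<exists>(f :: 'a list \<Rightarrow> 'a list) (M :: 'a tm) (T :: nat \<Rightarrow> real).
           (\<forall>w \<in> L. f w \<in> L \<and> \<psi> (f w) = \<psi> w \<otimes>\<^bsub>G\<^esub> s) \<and>
           tm_computes_in_time M T f \<and> ((\<lambda>n. T n / (real n * ln (real n))) \<longlonglongrightarrow> 0)"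
  shows "\<exists>K. \<forall>s\<in>S. \<forall>w\<in>L. \<exists>w'\<in>L. \<psi> w' = \<psi> w \<otimes>\<^bsub>G\<^esub> s \<and> length w' \<le> length w + K"
proof -
  have "\<exists>R. \<forall>w\<in>L. \<exists>w'\<in>L. \<psi> w' = \<psi> w \<otimes>\<^bsub>G\<^esub> s \<and> length w' \<le> length w + R"
    if s: "s \<in> S" for s
  proof -
    obtain f M T where f: "\<forall>w\<in>L. f w \<in> L \<and> \<psi> (f w) = \<psi> w \<otimes>\<^bsub>G\<^esub> s"
        and M: "tm_computes_in_time M T f" "(\<lambda>n. T n / (real n * ln (real n))) \<longlonglongrightarrow> 0"
      using assms(2) s by blast
    obtain R where "\<forall>x. length (f x) \<le> length x + R"
      using output_length_le_input_plus_const[OF M] by blast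
    then show ?thesis
      using f by blast
  qed
  then obtain R where R: "\<And>s w. s \<in> S \<Longrightarrow> w \<in> L \<Longrightarrow>
      \<exists>w'\<in>L. \<psi> w' = \<psi> w \<otimes>\<^bsub>G\<^esub> s \<and> length w' \<le> length w + R s"
    by (metis (no_types))
  have "\<exists>w'\<in>L. \<psi> w' = \<psi> w \<otimes>\<^bsub>G\<^esub> s \<and> length w' \<le> length w + (\<Sum>s\<in>S. R s)"
    if "s \<in> S" "w \<in> L" for s w
  proof -
    have "R s \<le> (\<Sum>s\<in>S. R s)"
      using assms(1) that(1) by (intro member_le_sum) auto
    then show ?thesis
      using R[OF that] by (fastforce intro: order_trans)
  qed
  then show ?thesis
    by blast
qed

lemma normal_form_quasigeodesic:
  assumes "group G" "semigroup_generates G S" "bij_betw \<psi> L (carrier G)"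
    and step: "\<And>s w. s \<in> S \<Longrightarrow> w \<in> L \<Longrightarrow> \<exists>w'\<in>L. \<psi> w' = \<psi> w \<otimes>\<^bsub>G\<^esub> s \<and> length w' \<le> length w + K"
  shows "\<exists>C::real. C > 0 \<and>
           (\<forall>g \<in> carrier G. \<forall>w \<in> L. \<psi> w = g \<longrightarrow>
              real (length w) \<le> C * (real (word_length G S g) + 1))"
proof -
  have monoid: "monoid G"
    using assms(1) by (rule group.is_monoid)
  have SG: "S \<subseteq> carrier G"
    using assms(2) unfolding semigroup_generates_def by (elim conjE)
  have "\<one>\<^bsub>G\<^esub> \<in> \<psi> ` L"
    using bij_betw_imp_surj_on[OF assms(3)] monoid.one_closed[OF monoid] by simp
  then obtain w1 where w1: "w1 \<in> L" "\<psi> w1 = \<one>\<^bsub>G\<^esub>"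
    by (rule imageE) simp
  have "real (length w) \<le> real (length w1 + K + 1) * (real (word_length G S (\<psi> w)) + 1)"
    if w: "w \<in> L" for w
  proof -
    have "\<psi> w \<in> carrier G"
      using bij_betwE[OF assms(3)] w by blast
    then obtain ws where ws: "set ws \<subseteq> S" "length ws = word_length G S (\<psi> w)" "word_prod G ws = \<psi> w"
      using word_length_attained[OF assms(2)] by blast
    obtain w' where w': "w' \<in> L" "\<psi> w' = \<psi> w" "length w' \<le> length w1 + K * length ws"
      using normal_form_length_le[OF monoid SG w1 step ws(1)] ws(3) by auto
    have "w' = w"
      using inj_onD[OF bij_betw_imp_inj_on[OF assms(3)] w'(2) w'(1) w] .
    then have "length w \<le> length w1 + K * word_length G S (\<psi> w)"
      using w'(3) ws(2) by simp
    then have "length w \<le> (length w1 + K + 1) * (word_length G S (\<psi> w) + 1)"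
      by (simp add: algebra_simps)
    then have "real (length w) \<le> real ((length w1 + K + 1) * (word_length G S (\<psi> w) + 1))"
      by (simp only: of_nat_le_iff)
    then show ?thesis
      by (simp add: algebra_simps)
  qed
  then show ?thesis
    by (intro exI[of _ "real (length w1 + K + 1)"]) auto
qed

theorem theorem1p4:
  fixes G :: "('g, 'b) monoid_scheme"
    and S :: "'g set"
    and L :: "('a::finite) list set"
    and \<psi> :: "'a list \<Rightarrow> 'g"
  assumes "group G"
    and "finite S"
    and "semigroup_generates G S"
    and "bij_betw \<psi> L (carrier G)"
    and "\<forall>s \<in> S. \<exists>(f :: 'a list \<Rightarrow> 'a list) (M :: 'a tm) (T :: nat \<Rightarrow> real).
           (\<forall>w \<in> L. f w \<in> L \<and> \<psi> (f w) = \<psi> w \<otimes>\<^bsub>G\<^esub> s) \<and>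
           tm_computes_in_time M T f \<and>
           ((\<lambda>n. T n / (real n * ln (real n))) \<longlonglongrightarrow> 0)"
  shows "\<exists>C::real. C > 0 \<and>
           (\<forall>g \<in> carrier G. \<forall>w \<in> L. \<psi> w = g \<longrightarrow>
              real (length w) \<le> C * (real (word_length G S g) + 1))"
proof -
  obtain K where "\<forall>s\<in>S. \<forall>w\<in>L. \<exists>w'\<in>L. \<psi> w' = \<psi> w \<otimes>\<^bsub>G\<^esub> s \<and> length w' \<le> length w + K"
    using uniform_right_multiplication_bound[OF assms(2,5)] by blast
  then show ?thesis
    using normal_form_quasigeodesic[OF assms(1,3,4)] by blast
qed

end
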